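(* Let $F$ be a $4$-regular graph, let $E\subseteq E(F)$ be based in $F$, and let $C$ be an oriented Euler system of $F$. Then $\Gamma_{E,C}$ is an integral cycle basis of $F-E$.
   Context: Graphs: $G=(V,H,E,\epsilon)$ with finite sets of vertices $V$ and half-edges $H$, a partition $E$ of $H$ into unordered pairs (edges), and $\epsilon:H\to V$; loops and multiple edges allowed. $G-E'$ deletes the edges of $E'$. $E'\subseteq E(G)$ is based in $G$ if it contains exactly one edge of each connected component of $G$. A directed version orders each edge as (tail, head). A directed single transition is an ordered pair of distinct half-edges incident with a common vertex. A closed walk is a sequence $((h_1,h_2),\dots,(h_{n-1},h_n))$ of directed single transitions with $\{h_2,h_3\},\{h_4,h_5\},\dots,\{h_n,h_1\}$ edges, up to cyclic shift. $\sigma(D,W)\in\mathbb Z^{E}$ counts, at each edge, traversals by $W$ along its direction in $D$ minus traversals against it. An oriented circuit is a nonempty closed walk in which each half-edge occurs at most once (vertices may repeat). The cycle space of $D$ is the right null space over $\mathbb Q$ of its vertex-edge incidence matrix. A cycle basis of $G$ is a set $B$ of closed walks such that the $\sigma(D,W)$, $W\in B$, are pairwise distinct and form a basis of the cycle space of $D$; it is integral if every $\sigma(D,W)$, $W$ a closed walk of $G$, lies in the $\mathbb Z$-span of $\{\sigma(D,W'):W'\in B\}$ (independent of $D$). $F$ is $4$-regular if every vertex is incident with exactly $4$ half-edges. An oriented Euler system of $F$ consists of one oriented Eulerian circuit (traversing every edge exactly once) for each connected component of $F$; it visits each vertex exactly twice. For a vertex $v$, the oriented circuit induced by $C$ at $v$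 based on $E$ is the segment from $v$ back to $v$ of the oriented Eulerian circuit of the component of $v$ that does not traverse the edge of $E$ in that component, with the inherited orientation. $\Gamma_{E,C}$ is the set of all these oriented circuits, $v\in V(F)$. *)

theory Defs
  imports Complex_Main "HOL-Library.Function_Algebras"
begin

text \<open>A graph (V, H, E, eps): vertices, half-edges, edges (a partition of H into
  unordered pairs), and the incidence map eps from half-edges to vertices.\<close>
record ('v, 'h) graph =
  gV :: "'v set"
  gH :: "'h set"
  gE :: "'h set set"
  geps :: "'h \<Rightarrow> 'v"

definition wf_graph :: "('v, 'h) graph \<Rightarrow> bool" where
  "wf_graph G \<longleftrightarrow> finite (gV G) \<and> finite (gH G)
     \<and> (\<forall>e\<in>gE G. e \<subseteq> gH G \<and> card e = 2)
     \<and> (\<forall>h\<in>gH G. \<exists>!e. e \<in> gE G \<and> h \<in> e)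
     \<and> geps G ` gH G \<subseteq> gV G"

definition four_regular :: "('v, 'h) graph \<Rightarrow> bool" where
  "four_regular G \<longleftrightarrow> (\<forall>v\<in>gV G. card {h\<in>gH G. geps G h = v} = 4)"

definition adj_rel :: "('v, 'h) graph \<Rightarrow> ('v \<times> 'v) set" where
  "adj_rel G = {(v, w). \<exists>e\<in>gE G. \<exists>h\<in>e. \<exists>h'\<in>e. h \<noteq> h' \<and> geps G h = v \<and> geps G h' = w}"

definition comp_of :: "('v, 'h) graph \<Rightarrow> 'v \<Rightarrow> 'v set" where
  "comp_of G v = {w\<in>gV G. (v, w) \<in> (adj_rel G)\<^sup>*}"

definition components :: "('v, 'h) graph \<Rightarrow> 'v set set" where
  "components G = comp_of G ` gV G"

definition based :: "('v, 'h) graph \<Rightarrow> 'h set set \<Rightarrow> bool" where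
  "based G Eb \<longleftrightarrow> Eb \<subseteq> gE G \<and> (\<forall>K\<in>components G. \<exists>!e. e \<in> Eb \<and> geps G ` e \<subseteq> K)"

definition delete_edges :: "('v, 'h) graph \<Rightarrow> 'h set set \<Rightarrow> ('v, 'h) graph" where
  "delete_edges G Eb = G\<lparr>gH := gH G - \<Union>Eb, gE := gE G - Eb\<rparr>"

text \<open>A closed walk ((h1,h2),...,(h_{n-1},h_n)) is represented by the list
  [h1,...,hn]: positions (2i, 2i+1) are directed single transitions, and
  the i-th traversed edge is {L!(2i+1), L!((2i+2) mod n)}.\<close>
definition traversal :: "'h list \<Rightarrow> nat \<Rightarrow> 'h set" where
  "traversal L i = {L ! (2*i+1), L ! ((2*i+2) mod length L)}"

definition closed_walk :: "('v, 'h) graph \<Rightarrow> 'h list \<Rightarrow> bool" where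
  "closed_walk G L \<longleftrightarrow> even (length L) \<and> set L \<subseteq> gH G
     \<and> (\<forall>i < length L div 2.
          L ! (2*i) \<noteq> L ! (2*i+1) \<and> geps G (L ! (2*i)) = geps G (L ! (2*i+1))
          \<and> traversal L i \<in> gE G)"

definition oriented_circuit :: "('v, 'h) graph \<Rightarrow> 'h list \<Rightarrow> bool" where
  "oriented_circuit G L \<longleftrightarrow> closed_walk G L \<and> L \<noteq> [] \<and> distinct L"

text \<open>An orientation D is given by its set T of tail half-edges.\<close>
definition orientation :: "('v, 'h) graph \<Rightarrow> 'h set \<Rightarrow> bool" where
  "orientation G T \<longleftrightarrow> T \<subseteq> gH G \<and> (\<forall>e\<in>gE G. card (e \<inter> T) = 1)"

text \<open>sigma(D,W): traversals along the direction minus traversals against it.\<close>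
definition sigma :: "'h set \<Rightarrow> 'h list \<Rightarrow> 'h set \<Rightarrow> int" where
  "sigma T L e = (\<Sum>i < length L div 2.
      if traversal L i = e then (if L ! (2*i+1) \<in> T then 1 else -1) else 0)"

definition incidence :: "('v, 'h) graph \<Rightarrow> 'h set \<Rightarrow> 'v \<Rightarrow> 'h set \<Rightarrow> rat" where
  "incidence G T v e = of_nat (card {h\<in>e. h \<notin> T \<and> geps G h = v})
                     - of_nat (card {h\<in>e. h \<in> T \<and> geps G h = v})"

definition cycle_space :: "('v, 'h) graph \<Rightarrow> 'h set \<Rightarrow> ('h set \<Rightarrow> rat) set" where
  "cycle_space G T = {x. (\<forall>e. e \<notin> gE G \<longrightarrow> x e = 0)
                        \<and> (\<forall>v\<in>gV G. (\<Sum>e\<in>gE G. incidence G T v e * x e) = 0)}"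

definition qscale :: "rat \<Rightarrow> ('h set \<Rightarrow> rat) \<Rightarrow> ('h set \<Rightarrow> rat)" where
  "qscale c f = (\<lambda>e. c * f e)"

definition zscale :: "int \<Rightarrow> ('h set \<Rightarrow> int) \<Rightarrow> ('h set \<Rightarrow> int)" where
  "zscale c f = (\<lambda>e. c * f e)"

definition qsigma :: "'h set \<Rightarrow> 'h list \<Rightarrow> 'h set \<Rightarrow> rat" where
  "qsigma T L = (\<lambda>e. of_int (sigma T L e))"

definition cycle_basis :: "('v, 'h) graph \<Rightarrow> 'h list set \<Rightarrow> bool" where
  "cycle_basis G B \<longleftrightarrow> (\<forall>W\<in>B. closed_walk G W)
     \<and> (\<forall>T. orientation G T \<longrightarrow>
            inj_on (sigma T) B
          \<and> module.independent qscale (qsigma T ` B)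
          \<and> module.span qscale (qsigma T ` B) = cycle_space G T)"

definition integral_cycle_basis :: "('v, 'h) graph \<Rightarrow> 'h list set \<Rightarrow> bool" where
  "integral_cycle_basis G B \<longleftrightarrow> cycle_basis G B
     \<and> (\<forall>T. orientation G T \<longrightarrow>
           (\<forall>W. closed_walk G W \<longrightarrow> sigma T W \<in> module.span zscale (sigma T ` B)))"

definition euler_system :: "('v, 'h) graph \<Rightarrow> ('v set \<Rightarrow> 'h list) \<Rightarrow> bool" where
  "euler_system G C \<longleftrightarrow> (\<forall>K\<in>components G. closed_walk G (C K)
     \<and> (\<forall>e\<in>gE G. card {i. i < length (C K) div 2 \<and> traversal (C K) i = e}
                   = (if geps G ` e \<subseteq> K then 1 else 0)))"

text \<open>Segment of the closed walk L from the visit at transition i to the visit at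
  transition j, closed up by the transition (L!(2j), L!(2i+1)).\<close>
definition seg :: "'h list \<Rightarrow> nat \<Rightarrow> nat \<Rightarrow> 'h list" where
  "seg L i j = (let k = length L div 2; m = 2 * ((j + k - i) mod k);
                    xs = take m (rotate (2*i+1) L) in last xs # butlast xs)"

definition induced_circuit :: "('v, 'h) graph \<Rightarrow> 'h set set \<Rightarrow> ('v set \<Rightarrow> 'h list) \<Rightarrow> 'v \<Rightarrow> 'h list" where
  "induced_circuit G Eb C v = (let L = C (comp_of G v); k = length L div 2;
       I = {i. i < k \<and> geps G (L ! (2*i)) = v}
     in THE S. \<exists>i\<in>I. \<exists>j\<in>I. i \<noteq> j \<and> S = seg L i j \<and> (\<forall>e\<in>Eb. e \<inter> set S = {}))"

definition Gamma :: "('v, 'h) graph \<Rightarrow> 'h set set \<Rightarrow> ('v set \<Rightarrow> 'h list) \<Rightarrow> 'h list set" where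
  "Gamma G Eb C = induced_circuit G Eb C ` gV G"

end

theory Submission
  imports Defs
begin

text \<open>
  In a component with Euler circuit \<open>L\<close>, every vertex \<open>w\<close> is visited at exactly two positions
  \<open>a w\<close>, \<open>b w\<close> of \<open>L\<close>, and the circuit induced at \<open>w\<close> traverses the edges of \<open>L\<close> at the
  positions of the cyclic arc \<open>[a w, b w)\<close> that avoids the position \<open>p\<close> of the based edge.
  For an edge function \<open>x\<close> let \<open>y t\<close> be its value on the \<open>t\<close>-th edge of \<open>L\<close>, measured in the
  direction of \<open>L\<close>. Then \<open>x\<close> lies in the cycle space of \<open>F - E\<close> exactly when \<open>y p = 0\<close> and, at every
  vertex, the increments of \<open>y\<close> at its two visits cancel. Such a \<open>y\<close> is the sum over \<open>w\<close> of \<open>c w\<close>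
  times the indicator of \<open>[a w, b w)\<close>, where \<open>c w\<close> is the increment of \<open>y\<close> at \<open>b w\<close>: both sides
  jump by the same amount at every position and agree at \<open>p\<close>. This expands every element of the
  cycle space in the induced circuits, with integer coefficients when \<open>x\<close> is integral;
  conversely \<open>c w\<close> is the jump of the arc sum at \<open>b w\<close>, so the coefficients are unique.
\<close>

section \<open>Cyclic arcs\<close>

definition cyclic_pred :: "nat \<Rightarrow> nat \<Rightarrow> nat" where
  "cyclic_pred k t = (if t = 0 then k - 1 else t - 1)"

text \<open>\<open>t\<close> lies on the half-open cyclic arc \<open>[i, j)\<close> of \<open>{..<k}\<close>; the arc \<open>[i, i)\<close> is empty.\<close>
definition in_arc :: "nat \<Rightarrow> nat \<Rightarrow> nat \<Rightarrow> nat \<Rightarrow> bool" where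
  "in_arc k i j t \<longleftrightarrow> (t + k - i) mod k < (j + k - i) mod k"

lemma add_diff_mod_eq:
  "(x::nat) < k \<Longrightarrow> y < k \<Longrightarrow> (x + k - y) mod k = (if y \<le> x then x - y else x + k - y)"
  by (cases "y \<le> x") (simp_all add: le_mod_geq)

lemma cyclic_pred_less: "t < k \<Longrightarrow> cyclic_pred k t < k"
  unfolding cyclic_pred_def by arith

lemma cyclic_pred_Suc_mod: "0 < k \<Longrightarrow> cyclic_pred k (Suc x mod k) = x mod k"
  using mod_less_divisor[of k x] unfolding cyclic_pred_def by (auto simp: mod_Suc)

lemma Suc_cyclic_pred_mod: "t < (k::nat) \<Longrightarrow> Suc (cyclic_pred k t) mod k = t"
  unfolding cyclic_pred_def by auto

lemma in_arc_start: "i < k \<Longrightarrow> j < k \<Longrightarrow> i \<noteq> j \<Longrightarrow> in_arc k i j i \<and> \<not> in_arc k i j (cyclic_pred k i)"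
  using cyclic_pred_less[of i k] unfolding in_arc_def
  by (simp add: add_diff_mod_eq) (auto simp: cyclic_pred_def)

lemma in_arc_end: "i < k \<Longrightarrow> j < k \<Longrightarrow> i \<noteq> j \<Longrightarrow> \<not> in_arc k i j j \<and> in_arc k i j (cyclic_pred k j)"
  using cyclic_pred_less[of j k] unfolding in_arc_def
  by (simp add: add_diff_mod_eq) (auto simp: cyclic_pred_def)

lemma in_arc_cyclic_pred:
  "i < k \<Longrightarrow> j < k \<Longrightarrow> t < k \<Longrightarrow> t \<noteq> i \<Longrightarrow> t \<noteq> j \<Longrightarrow> in_arc k i j (cyclic_pred k t) = in_arc k i j t"
  using cyclic_pred_less[of t k] unfolding in_arc_def
  by (simp add: add_diff_mod_eq) (auto simp: cyclic_pred_def)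

lemma in_arc_swap: "i < k \<Longrightarrow> j < k \<Longrightarrow> t < k \<Longrightarrow> i \<noteq> j \<Longrightarrow> in_arc k i j t \<longleftrightarrow> \<not> in_arc k j i t"
  unfolding in_arc_def by (simp add: add_diff_mod_eq) auto

lemma add_offset_mod_eq:
  assumes "(i::nat) < k" and "t < k"
  shows "t = (i + (t + k - i) mod k) mod k"
  using add_diff_mod_eq[OF assms(2,1)] assms by (cases "i \<le> t") (auto simp: mod_if)

lemma offset_add_mod:
  assumes "(i::nat) < k" and "r < k"
  shows "((i + r) mod k + k - i) mod k = r"
  using assms by (cases "i + r < k") (auto simp: add_diff_mod_eq mod_if)

lemma arc_eq_image_offsets:
  assumes "i < k" and "j < k"
  shows "{t. t < k \<and> in_arc k i j t} = (\<lambda>r. (i + r) mod k) ` {..<(j + k - i) mod k}"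
proof -
  have "(j + k - i) mod k < k" using assms(1) by simp
  then have "r < k" if "r < (j + k - i) mod k" for r using that by linarith
  then show ?thesis
    using assms unfolding in_arc_def
    by (auto simp: offset_add_mod image_iff intro!: exI[of _ "(_ + k - i) mod k"]
             dest: add_offset_mod_eq[OF assms(1)])
qed

lemma inj_on_offsets:
  fixes i j k :: nat
  assumes "i < k"
  shows "inj_on (\<lambda>r. (i + r) mod k) {..<(j + k - i) mod k}"
proof
  fix r s assume r: "r \<in> {..<(j + k - i) mod k}" and s: "s \<in> {..<(j + k - i) mod k}"
    and eq: "(i + r) mod k = (i + s) mod k"
  have "(j + k - i) mod k < k" using assms by simp
  then have "r < k" "s < k" using r s by auto
  then show "r = s" using offset_add_mod[OF assms] eq by metis
qed

lemma sum_offsets_eq_sum_arc: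
  fixes g :: "nat \<Rightarrow> 'a::comm_monoid_add"
  assumes "i < k" and "j < k"
  shows "(\<Sum>r<(j + k - i) mod k. g ((i + r) mod k)) = (\<Sum>t<k. if in_arc k i j t then g t else 0)"
proof -
  have "(\<Sum>r<(j + k - i) mod k. g ((i + r) mod k)) = (\<Sum>t\<in>{t. t < k \<and> in_arc k i j t}. g t)"
    using sum.reindex[OF inj_on_offsets[OF assms(1)], of g] arc_eq_image_offsets[OF assms]
    by (simp add: comp_def)
  also have "\<dots> = (\<Sum>t<k. if in_arc k i j t then g t else 0)"
    by (rule sum.mono_neutral_cong_left) auto
  finally show ?thesis .
qed

text \<open>For the Euler circuit of a component of a 4-regular graph, \<open>W\<close> is the vertex set of the
  component and \<open>a w\<close>, \<open>b w\<close> are the two visits of \<open>w\<close>.\<close>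
locale arc_pairing =
  fixes k :: nat and W :: "'w set" and a b :: "'w \<Rightarrow> nat"
  assumes finite_arcs: "finite W"
    and endpoints: "w \<in> W \<Longrightarrow> a w < k \<and> b w < k \<and> a w \<noteq> b w"
    and unique_arc: "t < k \<Longrightarrow> \<exists>!w. w \<in> W \<and> (t = a w \<or> t = b w)"
begin

definition arc_sum :: "('w \<Rightarrow> 'r::comm_ring_1) \<Rightarrow> nat \<Rightarrow> 'r" where
  "arc_sum c t = (\<Sum>w\<in>W. if in_arc k (a w) (b w) t then c w else 0)"

lemma arc_sum_cyclic_pred_diff:
  assumes t: "t < k" and w0: "w0 \<in> W" "t = a w0 \<or> t = b w0"
  shows "arc_sum c (cyclic_pred k t) - arc_sum c t = (if t = b w0 then c w0 else - c w0)"
proof -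
  let ?f = "\<lambda>w. (if in_arc k (a w) (b w) (cyclic_pred k t) then c w else 0)
                 - (if in_arc k (a w) (b w) t then c w else 0)"
  have others: "?f w = 0" if "w \<in> W - {w0}" for w
  proof -
    have "t \<noteq> a w \<and> t \<noteq> b w" using unique_arc[OF t] w0 that by blast
    then show ?thesis using in_arc_cyclic_pred[of "a w" k "b w" t] endpoints that t by auto
  qed
  have "arc_sum c (cyclic_pred k t) - arc_sum c t = (\<Sum>w\<in>W. ?f w)"
    unfolding arc_sum_def by (simp add: sum_subtractf)
  also have "\<dots> = ?f w0"
    using finite_arcs w0 others by (simp add: sum.remove)
  also have "\<dots> = (if t = b w0 then c w0 else - c w0)"
    using in_arc_start[of "a w0" k "b w0"] in_arc_end[of "a w0" k "b w0"] endpoints[OF w0(1)] w0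
    by auto
  finally show ?thesis .
qed

lemma arc_sum_eq_0_imp_eq_0:
  assumes "\<forall>t<k. arc_sum c t = 0" and "w \<in> W"
  shows "c w = 0"
proof -
  have "b w < k" using endpoints[OF \<open>w \<in> W\<close>] by simp
  then show ?thesis
    using arc_sum_cyclic_pred_diff[of "b w" w c] assms cyclic_pred_less by simp
qed

text \<open>The difference of both sides is invariant under \<open>cyclic_pred\<close>, because at an endpoint of an
  arc the arc sum jumps by the increment of \<open>y\<close> there, and it vanishes at \<open>p\<close>.\<close>
lemma eq_arc_sum_if_balanced:
  fixes y :: "nat \<Rightarrow> 'r::comm_ring_1"
  assumes p: "p < k" and yp: "y p = 0" and outside: "\<forall>w\<in>W. \<not> in_arc k (a w) (b w) p"
    and balanced: "\<forall>w\<in>W. (y (cyclic_pred k (a w)) - y (a w)) + (y (cyclic_pred k (b w)) - y (b w)) = 0"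
    and t: "t < k"
  shows "y t = arc_sum (\<lambda>w. y (cyclic_pred k (b w)) - y (b w)) t"
proof -
  define D where "D w = y (cyclic_pred k (b w)) - y (b w)" for w
  define z where "z t = y t - arc_sum D t" for t
  have z_pred: "z (cyclic_pred k t) = z t" if t: "t < k" for t
  proof -
    obtain w0 where w0: "w0 \<in> W" "t = a w0 \<or> t = b w0" using unique_arc[OF t] by blast
    have "arc_sum D (cyclic_pred k t) - arc_sum D t = (if t = b w0 then D w0 else - D w0)"
      by (rule arc_sum_cyclic_pred_diff[OF t w0])
    also have "\<dots> = y (cyclic_pred k t) - y t"
    proof (cases "t = b w0")
      case False
      then have "t = a w0" using w0(2) by simp
      with balanced w0(1) show ?thesis
        unfolding D_def by (simp add: eq_neg_iff_add_eq_0 algebra_simps)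
    qed (simp add: D_def)
    finally show ?thesis unfolding z_def by (simp add: algebra_simps)
  qed
  have "z ((p + n) mod k) = 0" for n
  proof (induction n)
    case 0 then show ?case using yp outside p unfolding z_def arc_sum_def by simp
  next
    case (Suc n)
    then show ?case
      using z_pred[of "(p + Suc n) mod k"] cyclic_pred_Suc_mod[of k "p + n"] p by simp
  qed
  from this[of "t + k - p"] have "z t = 0" using t p by simp
  then show ?thesis unfolding z_def D_def by simp
qed

end

section \<open>Segments of closed walks\<close>

lemma double_plus_one_mod_double: "(0::nat) < k \<Longrightarrow> (2 * x + 1) mod (2 * k) = 2 * (x mod k) + 1"
  using mod_mult2_eq[of "2 * x + 1" 2 k] by simp

lemma set_eq_Union_traversals:
  assumes "even (length S)"
  shows "set S = (\<Union>r<length S div 2. traversal S r)"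
proof
  show "(\<Union>r<length S div 2. traversal S r) \<subseteq> set S"
    using assms by (auto simp: traversal_def)
next
  show "set S \<subseteq> (\<Union>r<length S div 2. traversal S r)"
  proof
    fix x assume "x \<in> set S"
    then obtain q where q: "q < length S" "x = S ! q" by (auto simp: in_set_conv_nth)
    obtain n where n: "length S = 2 * n" using assms by blast
    have "\<exists>r<n. x \<in> traversal S r"
    proof (cases "odd q")
      case True
      then obtain r where r: "q = 2 * r + 1" by (metis oddE)
      then have "x \<in> traversal S r" using q by (simp add: traversal_def)
      then show ?thesis using q n r by (intro exI[of _ r]) auto
    next
      case False
      then obtain r where r: "q = 2 * r" by blast
      show ?thesis
      proof (cases r)
        case 0
        have "n > 0" using q n by simp
        then have "2 * (n - 1) + 2 = length S" using n by simp
        then have "(2 * (n - 1) + 2) mod length S = 0" by simp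
        then have "x \<in> traversal S (n - 1)" using q r 0 by (simp add: traversal_def)
        then show ?thesis using \<open>n > 0\<close> by (intro exI[of _ "n - 1"]) auto
      next
        case (Suc r')
        then have "x \<in> traversal S r'" using q r by (auto simp: traversal_def)
        then show ?thesis using q r n Suc by (intro exI[of _ r']) auto
      qed
    qed
    then show "x \<in> (\<Union>r<length S div 2. traversal S r)" using n by auto
  qed
qed

locale walk_segment =
  fixes L :: "'h list" and k i j :: nat
  assumes length_L: "length L = 2 * k" and i: "i < k" and j: "j < k" and i_neq_j: "i \<noteq> j"
begin

definition steps :: nat where "steps = (j + k - i) mod k"

lemma k_pos: "0 < k" using i by simp

lemma steps_pos: "0 < steps" and steps_less: "steps < k"
  using i j i_neq_j unfolding steps_def by (auto simp: add_diff_mod_eq)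

lemma i_plus_steps: "(i + steps) mod k = j"
  using i j unfolding steps_def by (auto simp: add_diff_mod_eq mod_if)

lemma seg_unfold: "seg L i j = (let xs = take (2 * steps) (rotate (2*i+1) L) in last xs # butlast xs)"
  unfolding seg_def steps_def using length_L by simp

lemma length_seg: "length (seg L i j) = 2 * steps"
  unfolding seg_unfold Let_def using steps_pos steps_less length_L by simp

lemma nth_seg:
  assumes "n < 2 * steps"
  shows "seg L i j ! n = L ! ((2 * i + (if n = 0 then 2 * steps else n)) mod (2 * k))"
proof -
  let ?xs = "take (2 * steps) (rotate (2*i+1) L)"
  have length_xs: "length ?xs = 2 * steps" using steps_less length_L by simp
  have nth_xs: "?xs ! q = L ! ((2 * i + 1 + q) mod (2 * k))" if "q < 2 * steps" for q
  proof -
    have "?xs ! q = rotate (2*i+1) L ! q" using that by simp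
    also have "\<dots> = L ! ((2 * i + 1 + q) mod length L)"
      by (rule nth_rotate) (use that steps_less length_L in simp)
    finally show ?thesis using length_L by simp
  qed
  show ?thesis
  proof (cases n)
    case 0
    have "seg L i j ! n = last ?xs" unfolding seg_unfold Let_def 0 by simp
    also have "\<dots> = ?xs ! (2 * steps - 1)"
      using length_xs steps_pos last_conv_nth[of ?xs] by force
    also have "\<dots> = L ! ((2 * i + 1 + (2 * steps - 1)) mod (2 * k))" using nth_xs steps_pos by simp
    finally show ?thesis using 0 steps_pos by simp
  next
    case (Suc n')
    have "seg L i j ! n = ?xs ! n'"
      unfolding seg_unfold Let_def Suc using assms Suc length_xs by (simp add: nth_butlast)
    then show ?thesis using nth_xs assms Suc by simp
  qed
qed

lemma nth_seg_odd: "r < steps \<Longrightarrow> seg L i j ! (2 * r + 1) = L ! (2 * ((i + r) mod k) + 1)"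
  using nth_seg[of "2 * r + 1"] double_plus_one_mod_double[OF k_pos, of "i + r"]
  by (simp add: algebra_simps)

lemma nth_seg_even: "0 < r \<Longrightarrow> r < steps \<Longrightarrow> seg L i j ! (2 * r) = L ! (2 * ((i + r) mod k))"
  using nth_seg[of "2 * r"] mod_mult_mult1[of 2 "i + r" k] by (simp add: algebra_simps)

lemma nth_seg_0: "seg L i j ! 0 = L ! (2 * j)"
  using nth_seg[of 0] steps_pos mod_mult_mult1[of 2 "i + steps" k] i_plus_steps
  by (simp add: algebra_simps)

lemma nth_seg_next:
  assumes r: "r < steps"
  shows "seg L i j ! ((2 * r + 2) mod (2 * steps)) = L ! ((2 * ((i + r) mod k) + 2) mod (2 * k))"
proof -
  have "(2 * ((i + r) mod k) + 2) mod (2 * k) = (2 * (i + r) + 2) mod (2 * k)"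
    by (metis mod_mult_mult1 mod_add_left_eq)
  moreover have "seg L i j ! ((2 * r + 2) mod (2 * steps)) = L ! ((2 * (i + r) + 2) mod (2 * k))"
  proof (cases "r + 1 < steps")
    case True
    then show ?thesis using nth_seg[of "2 * r + 2"] by (simp add: algebra_simps)
  next
    case False
    then have "r + 1 = steps" using r by simp
    then have "2 * r + 2 = 2 * steps" by simp
    then have "(2 * r + 2) mod (2 * steps) = 0" by simp
    moreover have "2 * i + 2 * steps = 2 * (i + r) + 2" using \<open>r + 1 = steps\<close> by simp
    ultimately show ?thesis using nth_seg[of 0] steps_pos by simp
  qed
  ultimately show ?thesis by simp
qed

lemma traversal_seg: "r < steps \<Longrightarrow> traversal (seg L i j) r = traversal L ((i + r) mod k)"
  unfolding traversal_def length_seg length_L using nth_seg_odd nth_seg_next by simp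

lemma set_seg: "set (seg L i j) = (\<Union>t\<in>{t. t < k \<and> in_arc k i j t}. traversal L t)"
proof -
  have "set (seg L i j) = (\<Union>r<steps. traversal (seg L i j) r)"
    using set_eq_Union_traversals[of "seg L i j"] length_seg by simp
  also have "\<dots> = (\<Union>r<steps. traversal L ((i + r) mod k))"
    using traversal_seg by simp
  also have "\<dots> = (\<Union>t\<in>{t. t < k \<and> in_arc k i j t}. traversal L t)"
    unfolding arc_eq_image_offsets[OF i j] steps_def by simp
  finally show ?thesis .
qed

lemma sigma_seg: "sigma T (seg L i j) e =
   (\<Sum>t<k. if in_arc k i j t then
             (if traversal L t = e then (if L ! (2 * t + 1) \<in> T then 1 else -1) else 0) else 0)"
proof -
  have "sigma T (seg L i j) e = (\<Sum>r<steps. if traversal L ((i + r) mod k) = e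
        then (if L ! (2 * ((i + r) mod k) + 1) \<in> T then 1 else -1) else 0)"
    unfolding sigma_def length_seg
  proof (intro sum.cong)
    fix r assume "r \<in> {..<steps}"
    then show "(if traversal (seg L i j) r = e then if seg L i j ! (2 * r + 1) \<in> T then 1 else - 1 else 0)
      = (if traversal L ((i + r) mod k) = e then if L ! (2 * ((i + r) mod k) + 1) \<in> T then 1 else - 1 else 0)"
      by (simp only: lessThan_iff traversal_seg nth_seg_odd)
  qed simp
  also have "\<dots> = (\<Sum>t<k. if in_arc k i j t then
             (if traversal L t = e then (if L ! (2 * t + 1) \<in> T then 1 else -1) else 0) else 0)"
    unfolding steps_def by (rule sum_offsets_eq_sum_arc[OF i j])
  finally show ?thesis .
qed

end

section \<open>Incidence, closed walks and the cycle space\<close>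

lemma sum_Suc_mod_shift:
  fixes h :: "nat \<Rightarrow> nat \<Rightarrow> 'a::comm_monoid_add"
  shows "(\<Sum>i<n. h (Suc i mod n) i) = (\<Sum>s<n. h s (cyclic_pred n s))"
  by (rule sum.reindex_bij_witness[where j = "\<lambda>i. Suc i mod n" and i = "cyclic_pred n"])
     (auto simp: Suc_cyclic_pred_mod cyclic_pred_Suc_mod cyclic_pred_less)

text \<open>Summation by parts along a closed walk.\<close>
lemma sum_arrivals_departures:
  fixes W :: "'h list" and f :: "'h \<Rightarrow> 'v" and y :: "nat \<Rightarrow> 'a::comm_ring_1"
  assumes length_W: "length W = 2 * n" and transitions: "\<forall>i<n. f (W ! (2*i)) = f (W ! (2*i+1))"
  shows "(\<Sum>i<n. ((if f (W ! ((2*i+2) mod (2*n))) = v then 1 else 0)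
                  - (if f (W ! (2*i+1)) = v then 1 else 0)) * y i)
       = (\<Sum>s<n. if f (W ! (2*s)) = v then y (cyclic_pred n s) - y s else 0)"
proof -
  have next_pos: "(2*i+2) mod (2*n) = 2 * (Suc i mod n)" for i
    using mod_mult_mult1[of 2 "Suc i" n] by simp
  have departures: "(\<Sum>i<n. (if f (W ! (2*i+1)) = v then 1 else 0) * y i)
      = (\<Sum>i<n. (if f (W ! (2*i)) = v then 1 else 0) * y i)"
    using transitions by (intro sum.cong) auto
  have arrivals: "(\<Sum>i<n. (if f (W ! (2 * (Suc i mod n))) = v then 1 else 0) * y i)
      = (\<Sum>s<n. (if f (W ! (2*s)) = v then 1 else 0) * y (cyclic_pred n s))"
    by (rule sum_Suc_mod_shift)
  show ?thesis
    unfolding next_pos left_diff_distrib sum_subtractf departures arrivals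
    unfolding sum_subtractf[symmetric] by (intro sum.cong) simp_all
qed

text \<open>The incidence matrix over an arbitrary ring: cycles are expanded over \<open>\<int>\<close> and \<open>\<rat>\<close> alike.\<close>
definition incidence_coeff :: "('v, 'h) graph \<Rightarrow> 'h set \<Rightarrow> 'v \<Rightarrow> 'h set \<Rightarrow> 'a::comm_ring_1" where
  "incidence_coeff G T v e = of_nat (card {h\<in>e. h \<notin> T \<and> geps G h = v})
                            - of_nat (card {h\<in>e. h \<in> T \<and> geps G h = v})"

lemma incidence_eq_incidence_coeff: "incidence G T v e = incidence_coeff G T v e"
  unfolding incidence_def incidence_coeff_def by simp

lemma incidence_coeff_of_int: "(incidence_coeff G T v e :: 'a::comm_ring_1) = of_int (incidence_coeff G T v e)"
  unfolding incidence_coeff_def by simp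

lemma incidence_coeff_pair:
  assumes "a \<noteq> b" and "card ({a, b} \<inter> T) = 1"
  shows "(incidence_coeff G T v {a, b} :: 'a::comm_ring_1) * (if a \<in> T then 1 else -1)
       = (if geps G b = v then 1 else 0) - (if geps G a = v then 1 else 0)"
proof -
  have b: "b \<in> T \<longleftrightarrow> a \<notin> T"
    using assms by (cases "a \<in> T"; cases "b \<in> T") (auto simp: card_insert_if)
  show ?thesis
  proof (cases "a \<in> T")
    case True
    have "{h\<in>{a, b}. h \<notin> T \<and> geps G h = v} = (if geps G b = v then {b} else {})"
      "{h\<in>{a, b}. h \<in> T \<and> geps G h = v} = (if geps G a = v then {a} else {})"
      using True b by auto
    then show ?thesis unfolding incidence_coeff_def using True by simp
  next
    case False
    have "{h\<in>{a, b}. h \<notin> T \<and> geps G h = v} = (if geps G a = v then {a} else {})"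
      "{h\<in>{a, b}. h \<in> T \<and> geps G h = v} = (if geps G b = v then {b} else {})"
      using False b by auto
    then show ?thesis unfolding incidence_coeff_def using False by simp
  qed
qed

lemma sum_fun_apply: "(\<Sum>x\<in>A. f x) y = (\<Sum>x\<in>A. f x y)"
  by (induction A rule: infinite_finite_induct) auto

lemma (in module) independent_image_if_sum_scale_eq_0:
  assumes "finite V" and coeffs_0: "\<And>c. (\<Sum>w\<in>V. c w *s f w) = 0 \<Longrightarrow> \<forall>w\<in>V. c w = 0"
  shows "inj_on f V" and "independent (f ` V)"
proof -
  show inj: "inj_on f V"
  proof (rule inj_onI, rule ccontr)
    fix v w assume vw: "v \<in> V" "w \<in> V" "f v = f w" "v \<noteq> w"
    define c :: "_ \<Rightarrow> 'a" where "c u = (if u = v then 1 else if u = w then -1 else 0)" for u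
    have "(\<Sum>u\<in>V. c u *s f u) = f v - f w"
      using vw \<open>finite V\<close> by (simp add: c_def if_distrib[of "\<lambda>a. a *s _"] sum.If_cases scale_minus_left)
    then have "(\<Sum>u\<in>V. c u *s f u) = 0" using vw(3) by simp
    then have "c v = 0" using coeffs_0 vw(1) by blast
    then show False unfolding c_def by simp
  qed
  show "independent (f ` V)"
  proof
    assume "dependent (f ` V)"
    then obtain u where u: "\<exists>x\<in>f ` V. u x \<noteq> 0" "(\<Sum>x\<in>f ` V. u x *s x) = 0"
      unfolding dependent_finite[OF finite_imageI[OF \<open>finite V\<close>]] by blast
    then have "(\<Sum>w\<in>V. u (f w) *s f w) = 0"
      using sum.reindex[OF inj, of "\<lambda>x. u x *s x"] by simp
    then have "\<forall>w\<in>V. u (f w) = 0" by (rule coeffs_0)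
    then show False using u(1) by blast
  qed
qed

lemma module_qscale: "module qscale"
  by unfold_locales (simp_all add: qscale_def fun_eq_iff algebra_simps)

lemma module_zscale: "module zscale"
  by unfold_locales (simp_all add: zscale_def fun_eq_iff algebra_simps)

lemma subspace_cycle_space: "module.subspace qscale (cycle_space G T)"
proof (rule module.subspaceI[OF module_qscale])
  show "0 \<in> cycle_space G T" unfolding cycle_space_def by simp
  show "x + y \<in> cycle_space G T" if "x \<in> cycle_space G T" "y \<in> cycle_space G T" for x y
    using that unfolding cycle_space_def by (simp add: distrib_left sum.distrib)
  show "qscale c x \<in> cycle_space G T" if "x \<in> cycle_space G T" for c x
  proof -
    have "(\<Sum>e\<in>gE G. incidence G T v e * (c * x e)) = c * (\<Sum>e\<in>gE G. incidence G T v e * x e)" for v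
      by (simp add: sum_distrib_left algebra_simps)
    then show ?thesis using that unfolding cycle_space_def qscale_def by simp
  qed
qed

lemma sigma_eq_0_off_edges: "closed_walk G W \<Longrightarrow> e \<notin> gE G \<Longrightarrow> sigma T W e = 0"
  unfolding sigma_def closed_walk_def by (intro sum.neutral) auto

locale multigraph =
  fixes G :: "('v, 'h) graph"
  assumes wf: "wf_graph G"
begin

lemma finite_V: "finite (gV G)" and finite_H: "finite (gH G)"
  using wf unfolding wf_graph_def by auto

lemma edge_subset: "e \<in> gE G \<Longrightarrow> e \<subseteq> gH G"
  using wf unfolding wf_graph_def by auto

lemma card_edge: "e \<in> gE G \<Longrightarrow> card e = 2"
  using wf unfolding wf_graph_def by auto

lemma eps_in_V: "h \<in> gH G \<Longrightarrow> geps G h \<in> gV G"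
  using wf unfolding wf_graph_def by auto

lemma edge_exists: "h \<in> gH G \<Longrightarrow> \<exists>e\<in>gE G. h \<in> e"
  using wf unfolding wf_graph_def by blast

lemma edge_unique: "e \<in> gE G \<Longrightarrow> e' \<in> gE G \<Longrightarrow> h \<in> e \<Longrightarrow> h \<in> e' \<Longrightarrow> e = e'"
  using wf edge_subset unfolding wf_graph_def by blast

lemma edge_nonempty: "e \<in> gE G \<Longrightarrow> \<exists>h. h \<in> e"
  using card_edge[of e] by (metis card.empty ex_in_conv zero_neq_numeral)

lemma finite_E: "finite (gE G)"
  using finite_H edge_subset by (meson Pow_iff finite_Pow_iff finite_subset subsetI)

lemma sym_adj_rel: "sym (adj_rel G)"
proof (rule symI)
  fix a b assume "(a, b) \<in> adj_rel G"
  then obtain e h h' where "e \<in> gE G" "h \<in> e" "h' \<in> e" "h \<noteq> h'" "geps G h = a" "geps G h' = b"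
    unfolding adj_rel_def by blast
  then have "\<exists>e\<in>gE G. \<exists>x\<in>e. \<exists>y\<in>e. x \<noteq> y \<and> geps G x = b \<and> geps G y = a" by metis
  then show "(b, a) \<in> adj_rel G" unfolding adj_rel_def by simp
qed

lemma comp_of_refl: "v \<in> gV G \<Longrightarrow> v \<in> comp_of G v"
  unfolding comp_of_def by simp

lemma comp_of_subset: "comp_of G v \<subseteq> gV G"
  unfolding comp_of_def by auto

lemma comp_of_eq: "w \<in> comp_of G v \<Longrightarrow> comp_of G w = comp_of G v"
proof -
  assume "w \<in> comp_of G v"
  then have vw: "(v, w) \<in> (adj_rel G)\<^sup>*" unfolding comp_of_def by simp
  then have "(w, v) \<in> (adj_rel G)\<^sup>*" using sym_rtrancl[OF sym_adj_rel] by (meson symD)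
  then show ?thesis unfolding comp_of_def using vw by (meson rtrancl_trans)
qed

lemma comp_of_in_components: "v \<in> gV G \<Longrightarrow> comp_of G v \<in> components G"
  unfolding components_def by simp

lemma component_subset: "K \<in> components G \<Longrightarrow> K \<subseteq> gV G"
  unfolding components_def using comp_of_subset by blast

lemma comp_of_component: "K \<in> components G \<Longrightarrow> w \<in> K \<Longrightarrow> comp_of G w = K"
  unfolding components_def using comp_of_eq by blast

lemma edge_in_comp_of: "e \<in> gE G \<Longrightarrow> h \<in> e \<Longrightarrow> geps G ` e \<subseteq> comp_of G (geps G h)"
proof
  fix x assume e: "e \<in> gE G" and h: "h \<in> e" and "x \<in> geps G ` e"
  then obtain h' where h': "h' \<in> e" "x = geps G h'" by auto
  have "geps G h \<in> gV G" "x \<in> gV G" using e h h' edge_subset eps_in_V by auto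
  moreover have "h = h' \<or> (geps G h, x) \<in> adj_rel G" unfolding adj_rel_def using e h h' by blast
  ultimately show "x \<in> comp_of G (geps G h)" using h' unfolding comp_of_def by auto
qed

lemma wf_graph_delete_edges:
  assumes "Eb \<subseteq> gE G"
  shows "wf_graph (delete_edges G Eb)"
proof -
  have disjoint: "e \<inter> \<Union>Eb = {}" if "e \<in> gE G - Eb" for e
    using that assms edge_unique by blast
  then have "e \<subseteq> gH G - \<Union>Eb" if "e \<in> gE G - Eb" for e
    using that edge_subset by blast
  moreover have "\<exists>!e. e \<in> gE G - Eb \<and> h \<in> e" if "h \<in> gH G - \<Union>Eb" for h
    using that edge_exists edge_unique by blast
  ultimately show ?thesis
    using finite_V finite_H card_edge eps_in_V
    unfolding wf_graph_def delete_edges_def by auto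
qed

lemma closed_walk_balanced:
  assumes W: "closed_walk G W" and T: "orientation G T"
  shows "(\<Sum>e\<in>gE G. incidence_coeff G T v e * sigma T W e) = 0"
proof -
  define n where "n = length W div 2"
  have length_W: "length W = 2 * n" using W unfolding closed_walk_def n_def by auto
  have traversal_E: "traversal W i \<in> gE G" if "i < n" for i
    using W that unfolding closed_walk_def n_def by auto
  let ?sign = "\<lambda>i. (if W ! (2*i+1) \<in> T then 1 else -1) :: int"
  have "(\<Sum>e\<in>gE G. incidence_coeff G T v e * sigma T W e)
      = (\<Sum>e\<in>gE G. \<Sum>i<n. if traversal W i = e then incidence_coeff G T v e * ?sign i else 0)"
    unfolding sigma_def n_def[symmetric] sum_distrib_left by (intro sum.cong refl) simp
  also have "\<dots> = (\<Sum>i<n. \<Sum>e\<in>gE G. if traversal W i = e then incidence_coeff G T v e * ?sign i else 0)"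
    by (rule sum.swap)
  also have "\<dots> = (\<Sum>i<n. incidence_coeff G T v (traversal W i) * ?sign i)"
    using traversal_E finite_E by (intro sum.cong refl) (simp add: sum.delta)
  also have "\<dots> = (\<Sum>i<n. ((if geps G (W ! ((2*i+2) mod (2*n))) = v then 1 else 0)
                        - (if geps G (W ! (2*i+1)) = v then 1 else 0)) * 1)"
  proof (intro sum.cong refl)
    fix i assume "i \<in> {..<n}"
    then have i: "i < n" by simp
    have "W ! (2*i+1) \<noteq> W ! ((2*i+2) mod (2*n))"
      using card_edge[OF traversal_E[OF i]] unfolding traversal_def length_W by auto
    moreover have "card (traversal W i \<inter> T) = 1"
      using T traversal_E[OF i] unfolding orientation_def by blast
    ultimately show "incidence_coeff G T v (traversal W i) * ?sign i
      = ((if geps G (W ! ((2*i+2) mod (2*n))) = v then 1 else 0)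
          - (if geps G (W ! (2*i+1)) = v then 1 else 0)) * 1"
      using incidence_coeff_pair[of "W ! (2*i+1)" "W ! ((2*i+2) mod (2*n))" T G v]
      unfolding traversal_def length_W by simp
  qed
  also have "\<dots> = (\<Sum>s<n. if geps G (W ! (2*s)) = v then 1 - 1 else (0::int))"
    by (rule sum_arrivals_departures[OF length_W])
       (use W in \<open>simp add: closed_walk_def n_def\<close>)
  also have "\<dots> = 0" by (intro sum.neutral) simp
  finally show ?thesis .
qed

lemma closed_walk_in_cycle_space:
  assumes "closed_walk G W" and "orientation G T"
  shows "qsigma T W \<in> cycle_space G T"
proof -
  have "(\<Sum>e\<in>gE G. incidence G T v e * qsigma T W e)
      = of_int (\<Sum>e\<in>gE G. incidence_coeff G T v e * sigma T W e)" for v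
    unfolding qsigma_def incidence_eq_incidence_coeff by (simp add: incidence_coeff_of_int[where 'a = rat])
  then show ?thesis
    using closed_walk_balanced[OF assms] sigma_eq_0_off_edges[OF assms(1)]
    unfolding cycle_space_def qsigma_def by simp
qed

end

section \<open>The Euler circuit of a component\<close>

locale euler_setting = multigraph F for F :: "('v, 'h) graph" +
  fixes Eb :: "'h set set" and C :: "'v set \<Rightarrow> 'h list"
  assumes four_regular: "four_regular F" and based: "based F Eb" and euler: "euler_system F C"
begin

abbreviation G :: "('v, 'h) graph" where "G \<equiv> delete_edges F Eb"

abbreviation circuit :: "'v \<Rightarrow> 'h list" where "circuit \<equiv> induced_circuit F Eb C"

lemma G_simps: "gV G = gV F" "gH G = gH F - \<Union>Eb" "gE G = gE F - Eb" "geps G = geps F"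
  unfolding delete_edges_def by simp_all

lemma Eb_subset: "Eb \<subseteq> gE F"
  using based unfolding based_def by blast

sublocale reduced: multigraph G
  using wf_graph_delete_edges[OF Eb_subset] by unfold_locales

end

locale euler_component = euler_setting F Eb C for F :: "('v, 'h) graph" and Eb C +
  fixes K :: "'v set"
  assumes K: "K \<in> components F"
begin

abbreviation L :: "'h list" where "L \<equiv> C K"

definition k :: nat where "k = length L div 2"

lemma closed_walk_L: "closed_walk F L"
  and card_traversals: "e \<in> gE F \<Longrightarrow>
    card {i. i < k \<and> traversal L i = e} = (if geps F ` e \<subseteq> K then 1 else 0)"
  using euler K unfolding euler_system_def k_def by auto

lemma length_L: "length L = 2 * k"
  using closed_walk_L unfolding closed_walk_def k_def by auto

lemma set_L_subset: "set L \<subseteq> gH F"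
  using closed_walk_L unfolding closed_walk_def by auto

lemma transition: "t < k \<Longrightarrow> L ! (2*t) \<noteq> L ! (2*t+1) \<and> geps F (L ! (2*t)) = geps F (L ! (2*t+1))"
  using closed_walk_L unfolding closed_walk_def k_def by auto

lemma traversal_in_E: "t < k \<Longrightarrow> traversal L t \<in> gE F"
  using closed_walk_L unfolding closed_walk_def k_def by auto

lemma traversal_in_K: "t < k \<Longrightarrow> geps F ` traversal L t \<subseteq> K"
proof -
  assume t: "t < k"
  have "card {i. i < k \<and> traversal L i = traversal L t} \<noteq> 0"
    using t by (auto simp: card_eq_0_iff)
  then show ?thesis using card_traversals[OF traversal_in_E[OF t]] by (auto split: if_splits)
qed

lemma traversal_inj: "t < k \<Longrightarrow> t' < k \<Longrightarrow> traversal L t = traversal L t' \<Longrightarrow> t = t'"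
proof (rule ccontr)
  assume t: "t < k" "t' < k" "traversal L t = traversal L t'" "t \<noteq> t'"
  let ?S = "{i. i < k \<and> traversal L i = traversal L t}"
  have "card {t, t'} \<le> card ?S" using t by (intro card_mono) auto
  moreover have "card ?S \<le> 1" using card_traversals[OF traversal_in_E[OF t(1)]] by simp
  ultimately show False using t(4) by simp
qed

lemma traversal_surj: "e \<in> gE F \<Longrightarrow> geps F ` e \<subseteq> K \<Longrightarrow> \<exists>t<k. traversal L t = e"
  using card_traversals[of e] by (metis (mono_tags, lifting) card.empty empty_Collect_eq zero_neq_one)

lemma traversal_ends_neq: "t < k \<Longrightarrow> L ! (2*t+1) \<noteq> L ! ((2*t+2) mod (2*k))"
  using card_edge[OF traversal_in_E] unfolding traversal_def length_L by fastforce

lemma distinct_L: "distinct L"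
proof -
  have "card (set L) = card (\<Union>t<k. traversal L t)"
    using set_eq_Union_traversals[of L] length_L by simp
  also have "\<dots> = (\<Sum>t<k. card (traversal L t))"
  proof (rule card_UN_disjoint)
    show "\<forall>t\<in>{..<k}. finite (traversal L t)" unfolding traversal_def by simp
    show "\<forall>t\<in>{..<k}. \<forall>t'\<in>{..<k}. t \<noteq> t' \<longrightarrow> traversal L t \<inter> traversal L t' = {}"
      using traversal_inj traversal_in_E edge_unique by blast
  qed simp
  also have "\<dots> = length L"
    using card_edge[OF traversal_in_E] length_L by simp
  finally show ?thesis by (rule card_distinct)
qed

lemma visit_in_traversal: "t < k \<Longrightarrow> L ! (2*t) \<in> traversal L (cyclic_pred k t)"
proof -
  assume t: "t < k"
  have "2 * cyclic_pred k t + 2 = (if t = 0 then 2 * k else 2 * t)"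
    using t unfolding cyclic_pred_def by auto
  then have "(2 * cyclic_pred k t + 2) mod (2 * k) = 2 * t"
    using t by (cases "t = 0") simp_all
  then show ?thesis unfolding traversal_def length_L by simp
qed

lemma visited_vertex_in_K: "t < k \<Longrightarrow> geps F (L ! (2*t)) \<in> K"
  using visit_in_traversal traversal_in_K cyclic_pred_less by blast

definition visits :: "'v \<Rightarrow> nat set" where
  "visits v = {t. t < k \<and> geps F (L ! (2*t)) = v}"

lemma half_edges_at_vertex:
  assumes v: "v \<in> K"
  shows "{h \<in> gH F. geps F h = v} = (\<lambda>t. L ! (2*t)) ` visits v \<union> (\<lambda>t. L ! (2*t+1)) ` visits v"
proof
  show "{h \<in> gH F. geps F h = v} \<subseteq> (\<lambda>t. L ! (2*t)) ` visits v \<union> (\<lambda>t. L ! (2*t+1)) ` visits v"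
  proof
    fix h assume h: "h \<in> {h \<in> gH F. geps F h = v}"
    then obtain e where e: "e \<in> gE F" "h \<in> e" using edge_exists by blast
    have "geps F ` e \<subseteq> K" using edge_in_comp_of[OF e] h comp_of_component[OF K v] by simp
    then obtain t where t: "t < k" "traversal L t = e" using traversal_surj e by blast
    have "h \<in> set L" using set_eq_Union_traversals[of L] length_L t e by auto
    then obtain q where q: "q < length L" "h = L ! q" by (auto simp: in_set_conv_nth)
    show "h \<in> (\<lambda>t. L ! (2*t)) ` visits v \<union> (\<lambda>t. L ! (2*t+1)) ` visits v"
    proof (cases "even q")
      case True
      then obtain r where r: "q = 2 * r" by blast
      then have "r \<in> visits v" unfolding visits_def using q h length_L by auto
      then show ?thesis using q r by blast
    next
      case False
      then obtain r where r: "q = 2 * r + 1" by (metis oddE)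
      then have r_less: "r < k" using q length_L by simp
      then have "r \<in> visits v" unfolding visits_def using q h r transition[OF r_less] by auto
      then show ?thesis using q r by blast
    qed
  qed
next
  show "(\<lambda>t. L ! (2*t)) ` visits v \<union> (\<lambda>t. L ! (2*t+1)) ` visits v \<subseteq> {h \<in> gH F. geps F h = v}"
  proof
    fix h assume "h \<in> (\<lambda>t. L ! (2*t)) ` visits v \<union> (\<lambda>t. L ! (2*t+1)) ` visits v"
    then obtain t where t: "t < k" "geps F (L ! (2*t)) = v" "h = L ! (2*t) \<or> h = L ! (2*t+1)"
      unfolding visits_def by auto
    have "L ! (2*t) \<in> set L" "L ! (2*t+1) \<in> set L" using t(1) length_L by auto
    then show "h \<in> {h \<in> gH F. geps F h = v}" using t transition[OF t(1)] set_L_subset by auto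
  qed
qed

lemma card_visits: assumes v: "v \<in> K" shows "card (visits v) = 2"
proof -
  have inj_even: "inj_on (\<lambda>t. L ! (2*t)) (visits v)"
    by (rule inj_onI) (use distinct_L length_L in \<open>auto simp: visits_def nth_eq_iff_index_eq\<close>)
  have inj_odd: "inj_on (\<lambda>t. L ! (2*t+1)) (visits v)"
    by (rule inj_onI) (use distinct_L length_L in \<open>auto simp: visits_def nth_eq_iff_index_eq\<close>)
  have disjoint: "(\<lambda>t. L ! (2*t)) ` visits v \<inter> (\<lambda>t. L ! (2*t+1)) ` visits v = {}"
  proof (rule ccontr)
    assume "(\<lambda>t. L ! (2*t)) ` visits v \<inter> (\<lambda>t. L ! (2*t+1)) ` visits v \<noteq> {}"
    then obtain t t' where "t \<in> visits v" "t' \<in> visits v" "L ! (2*t) = L ! (2*t'+1)" by auto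
    then have "2*t = 2*t'+1" using distinct_L length_L by (auto simp: visits_def nth_eq_iff_index_eq)
    then show False by presburger
  qed
  have "4 = card {h \<in> gH F. geps F h = v}"
    using four_regular v component_subset[OF K] unfolding four_regular_def by auto
  also have "\<dots> = card (visits v) + card (visits v)"
    unfolding half_edges_at_vertex[OF v] using disjoint inj_even inj_odd
    by (simp add: card_Un_disjoint card_image visits_def)
  finally show ?thesis by simp
qed

definition base_edge :: "'h set" where
  "base_edge = (THE e. e \<in> Eb \<and> geps F ` e \<subseteq> K)"

lemma base_edge_unique: "\<exists>!e. e \<in> Eb \<and> geps F ` e \<subseteq> K"
  using based K unfolding based_def by blast

lemma base_edge: "base_edge \<in> Eb" "geps F ` base_edge \<subseteq> K"
  using theI'[OF base_edge_unique] unfolding base_edge_def by auto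

definition base_pos :: nat where
  "base_pos = (THE t. t < k \<and> traversal L t = base_edge)"

lemma base_pos: "base_pos < k" "traversal L base_pos = base_edge"
proof -
  obtain t where "t < k" "traversal L t = base_edge"
    using traversal_surj base_edge Eb_subset by blast
  then have "\<exists>!t. t < k \<and> traversal L t = base_edge"
    using traversal_inj by blast
  then show "base_pos < k" "traversal L base_pos = base_edge"
    using theI'[of "\<lambda>t. t < k \<and> traversal L t = base_edge"] unfolding base_pos_def by auto
qed

lemma meets_Eb_imp_base_pos: "e \<in> Eb \<Longrightarrow> t < k \<Longrightarrow> h \<in> e \<Longrightarrow> h \<in> traversal L t \<Longrightarrow> t = base_pos"
proof -
  assume a: "e \<in> Eb" "t < k" "h \<in> e" "h \<in> traversal L t"
  then have "e = traversal L t" using edge_unique[of e "traversal L t" h] Eb_subset traversal_in_E by blast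
  then have "e = base_edge" using base_edge_unique base_edge a traversal_in_K[of t] by blast
  then show "t = base_pos" using traversal_inj[of t base_pos] base_pos a \<open>e = traversal L t\<close> by simp
qed

lemma traversal_notin_Eb: "t < k \<Longrightarrow> t \<noteq> base_pos \<Longrightarrow> traversal L t \<notin> Eb"
  using meets_Eb_imp_base_pos[of "traversal L t" t] edge_nonempty[OF traversal_in_E] by blast

lemma seg_avoids_Eb_iff:
  assumes i: "i < k" and j: "j < k" and "i \<noteq> j"
  shows "(\<forall>e\<in>Eb. e \<inter> set (seg L i j) = {}) \<longleftrightarrow> \<not> in_arc k i j base_pos"
proof -
  interpret walk_segment L k i j using length_L assms by unfold_locales
  show ?thesis
  proof
    assume avoids: "\<forall>e\<in>Eb. e \<inter> set (seg L i j) = {}"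
    show "\<not> in_arc k i j base_pos"
    proof
      assume "in_arc k i j base_pos"
      then have "base_edge \<subseteq> set (seg L i j)" using set_seg base_pos by auto
      moreover obtain h where "h \<in> base_edge" using edge_nonempty base_edge Eb_subset by blast
      ultimately show False using avoids base_edge by blast
    qed
  next
    assume "\<not> in_arc k i j base_pos"
    then show "\<forall>e\<in>Eb. e \<inter> set (seg L i j) = {}"
      using set_seg meets_Eb_imp_base_pos by fastforce
  qed
qed

text \<open>The two visits of \<open>v\<close>, ordered so that the arc from the first to the second avoids the
  based edge; the segment between them is then the induced circuit at \<open>v\<close>.\<close>
definition circuit_ends :: "'v \<Rightarrow> nat \<times> nat" where
  "circuit_ends v = (SOME (i, j). i \<in> visits v \<and> j \<in> visits v \<and> i \<noteq> j \<and> \<not> in_arc k i j base_pos)"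

definition circuit_start :: "'v \<Rightarrow> nat" where "circuit_start v = fst (circuit_ends v)"
definition circuit_end :: "'v \<Rightarrow> nat" where "circuit_end v = snd (circuit_ends v)"

lemma visits_less: "t \<in> visits v \<Longrightarrow> t < k"
  unfolding visits_def by simp

lemma circuit_ends:
  assumes v: "v \<in> K"
  shows "visits v = {circuit_start v, circuit_end v}" and "circuit_start v \<noteq> circuit_end v"
    and "\<not> in_arc k (circuit_start v) (circuit_end v) base_pos"
proof -
  obtain a b where ab: "a \<noteq> b" "visits v = {a, b}" using card_visits[OF v] by (metis card_2_iff)
  then have "a < k" "b < k" using visits_less by auto
  then have "\<not> in_arc k a b base_pos \<or> \<not> in_arc k b a base_pos"
    using in_arc_swap[of a k b base_pos] ab base_pos by auto
  then have "\<exists>ij. (case ij of (i, j) \<Rightarrow> i \<in> visits v \<and> j \<in> visits v \<and> i \<noteq> j \<and> \<not> in_arc k i j base_pos)"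
    using ab by auto
  then have "circuit_start v \<in> visits v \<and> circuit_end v \<in> visits v \<and> circuit_start v \<noteq> circuit_end v
      \<and> \<not> in_arc k (circuit_start v) (circuit_end v) base_pos"
    unfolding circuit_start_def circuit_end_def circuit_ends_def
    by (rule someI_ex[where P = "\<lambda>(i, j). i \<in> visits v \<and> j \<in> visits v \<and> i \<noteq> j \<and> \<not> in_arc k i j base_pos",
          THEN case_prodE]) auto
  then show "visits v = {circuit_start v, circuit_end v}" and "circuit_start v \<noteq> circuit_end v"
    and "\<not> in_arc k (circuit_start v) (circuit_end v) base_pos"
    using ab by auto
qed

lemma circuit_ends_less: "v \<in> K \<Longrightarrow> circuit_start v < k \<and> circuit_end v < k"
  using circuit_ends(1) visits_less by blast

lemma induced_circuit_eq_seg: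
  assumes v: "v \<in> K"
  shows "induced_circuit F Eb C v = seg L (circuit_start v) (circuit_end v)"
proof -
  have visits_eq: "{i. i < length L div 2 \<and> geps F (L ! (2*i)) = v} = visits v"
    unfolding visits_def k_def by simp
  note ends = circuit_ends[OF v] circuit_ends_less[OF v]
  show ?thesis unfolding induced_circuit_def Let_def comp_of_component[OF K v] visits_eq
  proof (rule the_equality)
    show "\<exists>i\<in>visits v. \<exists>j\<in>visits v. i \<noteq> j \<and> seg L (circuit_start v) (circuit_end v) = seg L i j
        \<and> (\<forall>e\<in>Eb. e \<inter> set (seg L (circuit_start v) (circuit_end v)) = {})"
      using ends seg_avoids_Eb_iff by blast
  next
    fix S assume "\<exists>i\<in>visits v. \<exists>j\<in>visits v. i \<noteq> j \<and> S = seg L i j \<and> (\<forall>e\<in>Eb. e \<inter> set S = {})"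
    then obtain i j where ij: "i \<in> visits v" "j \<in> visits v" "i \<noteq> j" "S = seg L i j"
      and avoids: "\<forall>e\<in>Eb. e \<inter> set S = {}" by blast
    have "i < k" "j < k" using ij visits_less by auto
    then have "\<not> in_arc k i j base_pos" using seg_avoids_Eb_iff ij avoids by simp
    moreover have "(i = circuit_start v \<and> j = circuit_end v) \<or> (i = circuit_end v \<and> j = circuit_start v)"
      using ij ends by auto
    ultimately show "S = seg L (circuit_start v) (circuit_end v)"
      using ij ends in_arc_swap[of "circuit_start v" k "circuit_end v" base_pos] base_pos by auto
  qed
qed

definition trav_sign :: "'h set \<Rightarrow> nat \<Rightarrow> int" where
  "trav_sign T t = (if L ! (2*t+1) \<in> T then 1 else -1)"

lemma trav_sign_square: "(of_int (trav_sign T t) :: 'a::comm_ring_1) * of_int (trav_sign T t) = 1"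
  unfolding trav_sign_def by simp

lemma sigma_induced_circuit:
  assumes v: "v \<in> K"
  shows "sigma T (induced_circuit F Eb C v) e =
    (\<Sum>t<k. if in_arc k (circuit_start v) (circuit_end v) t then
              (if traversal L t = e then trav_sign T t else 0) else 0)"
proof -
  interpret walk_segment L k "circuit_start v" "circuit_end v"
    using length_L circuit_ends_less[OF v] circuit_ends(2)[OF v] by unfold_locales auto
  show ?thesis unfolding induced_circuit_eq_seg[OF v] sigma_seg trav_sign_def by simp
qed

lemma sigma_induced_circuit_traversal:
  assumes "v \<in> K" and "t0 < k"
  shows "sigma T (induced_circuit F Eb C v) (traversal L t0)
    = (if in_arc k (circuit_start v) (circuit_end v) t0 then trav_sign T t0 else 0)"
proof -
  have "sigma T (induced_circuit F Eb C v) (traversal L t0) =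
     (\<Sum>t<k. if t = t0 then (if in_arc k (circuit_start v) (circuit_end v) t0 then trav_sign T t0 else 0) else 0)"
    unfolding sigma_induced_circuit[OF assms(1)]
    using traversal_inj[OF _ assms(2)] by (intro sum.cong) auto
  then show ?thesis using assms(2) by simp
qed

lemma sigma_induced_circuit_eq_0:
  "v \<in> K \<Longrightarrow> \<forall>t<k. traversal L t \<noteq> e \<Longrightarrow> sigma T (induced_circuit F Eb C v) e = 0"
  unfolding sigma_induced_circuit by (intro sum.neutral) auto

lemma closing_transition:
  assumes v: "v \<in> K"
  shows "L ! (2 * circuit_end v) \<noteq> L ! (2 * circuit_start v + 1)"
    and "geps F (L ! (2 * circuit_end v)) = geps F (L ! (2 * circuit_start v + 1))"
proof -
  have "2 * circuit_end v \<noteq> 2 * circuit_start v + 1" by presburger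
  then show "L ! (2 * circuit_end v) \<noteq> L ! (2 * circuit_start v + 1)"
    using distinct_L length_L circuit_ends_less[OF v] by (simp add: nth_eq_iff_index_eq)
  have "circuit_start v \<in> visits v" "circuit_end v \<in> visits v"
    using circuit_ends(1)[OF v] by blast+
  then show "geps F (L ! (2 * circuit_end v)) = geps F (L ! (2 * circuit_start v + 1))"
    using transition[of "circuit_start v"] unfolding visits_def by auto
qed

lemma closed_walk_induced_circuit:
  assumes v: "v \<in> K"
  shows "closed_walk G (induced_circuit F Eb C v)"
proof -
  note ends = circuit_ends[OF v] circuit_ends_less[OF v]
  interpret walk_segment L k "circuit_start v" "circuit_end v"
    using length_L ends by unfold_locales auto
  let ?S = "seg L (circuit_start v) (circuit_end v)"
  have on_arc: "(circuit_start v + r) mod k < k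
      \<and> in_arc k (circuit_start v) (circuit_end v) ((circuit_start v + r) mod k)" if "r < steps" for r
    using arc_eq_image_offsets[of "circuit_start v" k "circuit_end v"] ends that unfolding steps_def by blast
  have set_S: "set ?S \<subseteq> gH F - \<Union>Eb"
  proof
    fix h assume "h \<in> set ?S"
    then obtain t where t: "t < k" "in_arc k (circuit_start v) (circuit_end v) t" "h \<in> traversal L t"
      using set_seg by auto
    then have "t \<noteq> base_pos" using ends by auto
    then show "h \<in> gH F - \<Union>Eb"
      using t meets_Eb_imp_base_pos edge_subset traversal_in_E by blast
  qed
  have "?S ! (2*r) \<noteq> ?S ! (2*r+1) \<and> geps F (?S ! (2*r)) = geps F (?S ! (2*r+1))
      \<and> traversal ?S r \<in> gE F - Eb" if r: "r < steps" for r
  proof -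
    let ?t = "(circuit_start v + r) mod k"
    have t: "?t < k" "?t \<noteq> base_pos" using on_arc[OF r] ends by auto
    have "traversal ?S r \<in> gE F - Eb"
      using traversal_seg[OF r] traversal_in_E[OF t(1)] traversal_notin_Eb[OF t] by simp
    moreover have "?S ! (2*r) \<noteq> ?S ! (2*r+1) \<and> geps F (?S ! (2*r)) = geps F (?S ! (2*r+1))"
    proof (cases "r = 0")
      case True
      then have "?S ! (2*r) = L ! (2 * circuit_end v)" "?S ! (2*r+1) = L ! (2 * circuit_start v + 1)"
        using nth_seg_0 nth_seg_odd[OF r] ends(4) by simp_all
      then show ?thesis using closing_transition[OF v] by simp
    next
      case False
      then show ?thesis using nth_seg_even[OF _ r] nth_seg_odd[OF r] transition[OF t(1)] by simp
    qed
    ultimately show ?thesis by blast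
  qed
  then show ?thesis unfolding induced_circuit_eq_seg[OF v] closed_walk_def delete_edges_def
    using set_S length_seg by auto
qed

sublocale arcs: arc_pairing k K circuit_start circuit_end
proof unfold_locales
  show "finite K" using finite_subset[OF component_subset[OF K] finite_V] .
next
  fix w assume "w \<in> K"
  then show "circuit_start w < k \<and> circuit_end w < k \<and> circuit_start w \<noteq> circuit_end w"
    using circuit_ends(2) circuit_ends_less by simp
next
  fix t assume t: "t < k"
  let ?w = "geps F (L ! (2*t))"
  have w: "?w \<in> K" using visited_vertex_in_K[OF t] .
  show "\<exists>!w. w \<in> K \<and> (t = circuit_start w \<or> t = circuit_end w)"
  proof (rule ex1I[of _ ?w])
    have "t \<in> visits ?w" using t unfolding visits_def by simp
    then show "?w \<in> K \<and> (t = circuit_start ?w \<or> t = circuit_end ?w)"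
      using w circuit_ends(1)[OF w] by simp
  next
    fix w assume "w \<in> K \<and> (t = circuit_start w \<or> t = circuit_end w)"
    then have "t \<in> visits w" using circuit_ends(1)[of w] by auto
    then show "w = ?w" unfolding visits_def by simp
  qed
qed

lemma incidence_sum_eq_sum_traversals:
  fixes x :: "'h set \<Rightarrow> 'a::comm_ring_1"
  assumes v: "v \<in> K" and x0: "\<forall>e. e \<notin> gE G \<longrightarrow> x e = 0"
  shows "(\<Sum>e\<in>gE G. incidence_coeff G T v e * x e)
       = (\<Sum>t<k. incidence_coeff G T v (traversal L t) * x (traversal L t))"
proof -
  have "(\<Sum>e\<in>gE G. incidence_coeff G T v e * x e) = (\<Sum>e\<in>gE F. incidence_coeff G T v e * x e)"
    by (rule sum.mono_neutral_left) (use finite_E x0 G_simps in auto)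
  also have "\<dots> = (\<Sum>e\<in>traversal L ` {..<k}. incidence_coeff G T v e * x e)"
  proof (rule sum.mono_neutral_right)
    show "finite (gE F)" by (rule finite_E)
    show "traversal L ` {..<k} \<subseteq> gE F" using traversal_in_E by auto
    show "\<forall>e\<in>gE F - traversal L ` {..<k}. incidence_coeff G T v e * x e = 0"
    proof
      fix e assume e: "e \<in> gE F - traversal L ` {..<k}"
      have "geps F h \<noteq> v" if "h \<in> e" for h
      proof
        assume "geps F h = v"
        then have "geps F ` e \<subseteq> K" using edge_in_comp_of[of e h] e that comp_of_component[OF K v] by auto
        then show False using traversal_surj e by blast
      qed
      then have "{h\<in>e. h \<notin> T \<and> geps G h = v} = {}" "{h\<in>e. h \<in> T \<and> geps G h = v} = {}"
        using G_simps by auto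
      then show "incidence_coeff G T v e * x e = 0" unfolding incidence_coeff_def by (simp only:) simp
    qed
  qed
  also have "\<dots> = (\<Sum>t<k. incidence_coeff G T v (traversal L t) * x (traversal L t))"
    by (rule sum.reindex_cong[where l = "traversal L"]) (use traversal_inj in \<open>auto simp: inj_on_def\<close>)
  finally show ?thesis .
qed

definition flow :: "'h set \<Rightarrow> ('h set \<Rightarrow> 'a::comm_ring_1) \<Rightarrow> nat \<Rightarrow> 'a" where
  "flow T x t = of_int (trav_sign T t) * x (traversal L t)"

lemma flow_base_pos: "\<forall>e. e \<notin> gE G \<longrightarrow> x e = 0 \<Longrightarrow> flow T x base_pos = 0"
  unfolding flow_def using base_pos base_edge G_simps by simp

lemma incidence_traversal_eq_flow:
  fixes x :: "'h set \<Rightarrow> 'a::comm_ring_1"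
  assumes T: "orientation G T" and x0: "\<forall>e. e \<notin> gE G \<longrightarrow> x e = 0" and t: "t < k"
  shows "incidence_coeff G T v (traversal L t) * x (traversal L t) =
     ((if geps F (L ! ((2*t+2) mod (2*k))) = v then 1 else 0)
       - (if geps F (L ! (2*t+1)) = v then 1 else 0)) * flow T x t"
proof (cases "t = base_pos")
  case True
  then have "x (traversal L t) = 0" using base_pos base_edge x0 G_simps by simp
  then show ?thesis unfolding flow_def by simp
next
  case False
  then have "traversal L t \<in> gE G"
    using traversal_notin_Eb[OF t] traversal_in_E[OF t] G_simps by simp
  then have "card (traversal L t \<inter> T) = 1" using T unfolding orientation_def by blast
  then have "(incidence_coeff G T v {L ! (2*t+1), L ! ((2*t+2) mod (2*k))} :: 'a)
      * (if L ! (2*t+1) \<in> T then 1 else -1)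
      = (if geps G (L ! ((2*t+2) mod (2*k))) = v then 1 else 0) - (if geps G (L ! (2*t+1)) = v then 1 else 0)"
    by (intro incidence_coeff_pair[OF traversal_ends_neq[OF t]]) (simp add: traversal_def length_L)
  moreover have "(of_int (trav_sign T t) :: 'a) = (if L ! (2*t+1) \<in> T then 1 else -1)"
    by (simp add: trav_sign_def)
  moreover have "traversal L t = {L ! (2*t+1), L ! ((2*t+2) mod (2*k))}"
    unfolding traversal_def length_L ..
  ultimately have "incidence_coeff G T v (traversal L t) * (of_int (trav_sign T t) :: 'a)
      = (if geps F (L ! ((2*t+2) mod (2*k))) = v then 1 else 0) - (if geps F (L ! (2*t+1)) = v then 1 else 0)"
    unfolding G_simps by simp
  moreover have "(incidence_coeff G T v (traversal L t) * of_int (trav_sign T t)) * flow T x t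
      = incidence_coeff G T v (traversal L t) * (of_int (trav_sign T t) * of_int (trav_sign T t))
        * x (traversal L t)"
    unfolding flow_def by (simp add: algebra_simps)
  then have "incidence_coeff G T v (traversal L t) * x (traversal L t)
      = (incidence_coeff G T v (traversal L t) * of_int (trav_sign T t)) * flow T x t"
    unfolding trav_sign_square by simp
  ultimately show ?thesis by simp
qed

lemma incidence_sum_eq_flow_increments:
  fixes x :: "'h set \<Rightarrow> 'a::comm_ring_1"
  assumes v: "v \<in> K" and T: "orientation G T" and x0: "\<forall>e. e \<notin> gE G \<longrightarrow> x e = 0"
  shows "(\<Sum>e\<in>gE G. incidence_coeff G T v e * x e) =
     (flow T x (cyclic_pred k (circuit_start v)) - flow T x (circuit_start v))
     + (flow T x (cyclic_pred k (circuit_end v)) - flow T x (circuit_end v))"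
proof -
  let ?y = "flow T x"
  have "(\<Sum>e\<in>gE G. incidence_coeff G T v e * x e)
      = (\<Sum>t<k. incidence_coeff G T v (traversal L t) * x (traversal L t))"
    by (rule incidence_sum_eq_sum_traversals[OF v x0])
  also have "\<dots> = (\<Sum>t<k. ((if geps F (L ! ((2*t+2) mod (2*k))) = v then 1 else 0)
                         - (if geps F (L ! (2*t+1)) = v then 1 else 0)) * ?y t)"
    using incidence_traversal_eq_flow[OF T x0] by (intro sum.cong) auto
  also have "\<dots> = (\<Sum>s<k. if geps F (L ! (2*s)) = v then ?y (cyclic_pred k s) - ?y s else 0)"
    by (rule sum_arrivals_departures[OF length_L]) (use transition in blast)
  also have "\<dots> = (\<Sum>s\<in>visits v. ?y (cyclic_pred k s) - ?y s)"
  proof -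
    have "visits v = {s\<in>{..<k}. geps F (L ! (2*s)) = v}" unfolding visits_def by auto
    then show ?thesis
      using sum.inter_filter[of "{..<k}" "\<lambda>s. ?y (cyclic_pred k s) - ?y s" "\<lambda>s. geps F (L ! (2*s)) = v"]
      by simp
  qed
  also have "\<dots> = (?y (cyclic_pred k (circuit_start v)) - ?y (circuit_start v))
                 + (?y (cyclic_pred k (circuit_end v)) - ?y (circuit_end v))"
    using circuit_ends(1,2)[OF v] by simp
  finally show ?thesis .
qed

end

section \<open>Expansion in induced circuits\<close>

context euler_setting
begin

lemma euler_component_comp_of: "w \<in> gV F \<Longrightarrow> euler_component F Eb C (comp_of F w)"
  using comp_of_in_components by unfold_locales

lemma closed_walk_circuit: "w \<in> gV F \<Longrightarrow> closed_walk G (circuit w)"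
  using euler_component.closed_walk_induced_circuit[OF euler_component_comp_of] comp_of_refl by blast

lemma edge_on_euler_circuit:
  assumes e: "e \<in> gE F"
  shows "\<exists>K\<in>components F. \<exists>t < euler_component.k C K. traversal (C K) t = e"
proof -
  obtain h where h: "h \<in> e" using edge_nonempty e by blast
  then have v: "geps F h \<in> gV F" using e edge_subset eps_in_V by blast
  interpret euler_component F Eb C "comp_of F (geps F h)" using euler_component_comp_of[OF v] .
  show ?thesis using traversal_surj[OF e edge_in_comp_of[OF e h]] K by blast
qed

lemma sigma_circuit_off_E: "e \<notin> gE F \<Longrightarrow> w \<in> gV F \<Longrightarrow> sigma T (circuit w) e = 0"
  using euler_component.sigma_induced_circuit_eq_0[OF euler_component_comp_of] comp_of_refl
    euler_component.traversal_in_E[OF euler_component_comp_of] by metis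

end

context euler_component
begin

lemma sigma_circuit_traversal:
  assumes t0: "t0 < k" and w: "w \<in> gV F"
  shows "sigma T (circuit w) (traversal L t0) =
    (if w \<in> K \<and> in_arc k (circuit_start w) (circuit_end w) t0 then trav_sign T t0 else 0)"
proof (cases "w \<in> K")
  case True
  then show ?thesis using sigma_induced_circuit_traversal[OF True t0] by simp
next
  case False
  let ?K' = "comp_of F w"
  interpret K': euler_component F Eb C ?K' using euler_component_comp_of[OF w] .
  have "traversal (C ?K') t \<noteq> traversal L t0" if t: "t < K'.k" for t
  proof
    assume eq: "traversal (C ?K') t = traversal L t0"
    obtain h where h: "h \<in> traversal L t0" using edge_nonempty traversal_in_E[OF t0] by blast
    have "geps F h \<in> K" "geps F h \<in> ?K'"
      using traversal_in_K[OF t0] K'.traversal_in_K[OF t] h eq by blast+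
    then have "?K' = K" using comp_of_component[OF K] comp_of_component[OF K'.K] by metis
    then show False using comp_of_refl[OF w] False by simp
  qed
  then show ?thesis using K'.sigma_induced_circuit_eq_0[OF comp_of_refl[OF w]] False by simp
qed

lemma sum_sigma_circuits_traversal:
  fixes c :: "'v \<Rightarrow> 'a::comm_ring_1"
  assumes t0: "t0 < k"
  shows "(\<Sum>w\<in>gV F. c w * of_int (sigma T (circuit w) (traversal L t0)))
       = of_int (trav_sign T t0) * arcs.arc_sum c t0"
proof -
  have "(\<Sum>w\<in>gV F. c w * of_int (sigma T (circuit w) (traversal L t0)))
      = (\<Sum>w\<in>gV F. if w \<in> K then of_int (trav_sign T t0)
                        * (if in_arc k (circuit_start w) (circuit_end w) t0 then c w else 0) else 0)"
    using sigma_circuit_traversal[OF t0] by (intro sum.cong) auto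
  also have "\<dots> = of_int (trav_sign T t0) * arcs.arc_sum c t0"
  proof -
    have "gV F \<inter> K = K" using component_subset[OF K] by blast
    then show ?thesis
      unfolding arcs.arc_sum_def sum_distrib_left
      using sum.inter_restrict[OF finite_V, of "\<lambda>w. of_int (trav_sign T t0)
          * (if in_arc k (circuit_start w) (circuit_end w) t0 then c w else 0)" K]
      by simp
  qed
  finally show ?thesis .
qed

definition arc_increment :: "'h set \<Rightarrow> ('h set \<Rightarrow> 'a::comm_ring_1) \<Rightarrow> 'v \<Rightarrow> 'a" where
  "arc_increment T x w = flow T x (cyclic_pred k (circuit_end w)) - flow T x (circuit_end w)"

lemma flow_eq_arc_sum:
  fixes x :: "'h set \<Rightarrow> 'a::comm_ring_1"
  assumes T: "orientation G T" and x0: "\<forall>e. e \<notin> gE G \<longrightarrow> x e = 0"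
    and balanced: "\<forall>v\<in>gV F. (\<Sum>e\<in>gE G. incidence_coeff G T v e * x e) = 0"
    and t: "t < k"
  shows "flow T x t = arcs.arc_sum (arc_increment T x) t"
  unfolding arc_increment_def
proof (rule arcs.eq_arc_sum_if_balanced[where y = "flow T x", OF base_pos(1) flow_base_pos[OF x0] _ _ t])
  show "\<forall>w\<in>K. \<not> in_arc k (circuit_start w) (circuit_end w) base_pos"
    using circuit_ends(3) by blast
  show "\<forall>w\<in>K. flow T x (cyclic_pred k (circuit_start w)) - flow T x (circuit_start w)
             + (flow T x (cyclic_pred k (circuit_end w)) - flow T x (circuit_end w)) = 0"
    using balanced component_subset[OF K] incidence_sum_eq_flow_increments[OF _ T x0] by fastforce
qed

lemma sum_circuits_eq_0_on_K:
  fixes c :: "'v \<Rightarrow> 'a::comm_ring_1"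
  assumes zero: "\<forall>t<k. (\<Sum>w\<in>gV F. c w * of_int (sigma T (circuit w) (traversal L t))) = 0"
    and w: "w \<in> K"
  shows "c w = 0"
proof (rule arcs.arc_sum_eq_0_imp_eq_0[OF _ w], intro allI impI)
  fix t assume t: "t < k"
  have "of_int (trav_sign T t) * (of_int (trav_sign T t) * arcs.arc_sum c t) = 0"
    using zero t sum_sigma_circuits_traversal[OF t, of c T] by simp
  then show "arcs.arc_sum c t = 0"
    by (simp only: mult.assoc[symmetric] trav_sign_square mult_1)
qed

end

context euler_setting
begin

definition circuit_coeff :: "'h set \<Rightarrow> ('h set \<Rightarrow> 'a::comm_ring_1) \<Rightarrow> 'v \<Rightarrow> 'a" where
  "circuit_coeff T x w = euler_component.arc_increment F Eb C (comp_of F w) T x w"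

lemma eq_sum_circuits:
  fixes x :: "'h set \<Rightarrow> 'a::comm_ring_1"
  assumes T: "orientation G T" and x0: "\<forall>e. e \<notin> gE G \<longrightarrow> x e = 0"
    and balanced: "\<forall>v\<in>gV F. (\<Sum>e\<in>gE G. incidence_coeff G T v e * x e) = 0"
  shows "x e = (\<Sum>w\<in>gV F. circuit_coeff T x w * of_int (sigma T (circuit w) e))"
proof (cases "e \<in> gE F")
  case False
  then show ?thesis using x0 G_simps sigma_circuit_off_E by simp
next
  case True
  then obtain K t where K: "K \<in> components F" and t: "t < euler_component.k C K"
    and e: "traversal (C K) t = e"
    using edge_on_euler_circuit by blast
  interpret K: euler_component F Eb C K using K by unfold_locales
  have "K.arcs.arc_sum (circuit_coeff T x) t = K.arcs.arc_sum (K.arc_increment T x) t"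
    unfolding K.arcs.arc_sum_def circuit_coeff_def
    using comp_of_component[OF K] by (intro sum.cong refl) simp
  then have "(\<Sum>w\<in>gV F. circuit_coeff T x w * of_int (sigma T (circuit w) e))
      = of_int (K.trav_sign T t) * K.flow T x t"
    using K.sum_sigma_circuits_traversal[OF t, of "circuit_coeff T x" T]
      K.flow_eq_arc_sum[OF T x0 balanced t] e
    by simp
  also have "\<dots> = x e"
    unfolding K.flow_def e[symmetric] by (simp only: mult.assoc[symmetric] K.trav_sign_square mult_1)
  finally show ?thesis by simp
qed

lemma sum_circuits_eq_0_imp_eq_0:
  fixes c :: "'v \<Rightarrow> 'a::comm_ring_1"
  assumes "\<forall>e. (\<Sum>w\<in>gV F. c w * of_int (sigma T (circuit w) e)) = 0" and w: "w \<in> gV F"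
  shows "c w = 0"
  using euler_component.sum_circuits_eq_0_on_K[OF euler_component_comp_of[OF w]] assms comp_of_refl[OF w]
  by blast

lemma Gamma_eq: "Gamma F Eb C = circuit ` gV F"
  unfolding Gamma_def ..

lemma sum_scale_circuits_in_span:
  assumes "module scale" and "f ` Gamma F Eb C = B"
  shows "(\<Sum>w\<in>gV F. scale (c w) (f (circuit w))) \<in> module.span scale B"
  using assms Gamma_eq by (intro module.span_sum module.span_scale module.span_base) auto

lemma circuit_sigmas_independent:
  shows "inj_on (\<lambda>w. sigma T (circuit w)) (gV F)"
    and "module.independent qscale ((\<lambda>w. qsigma T (circuit w)) ` gV F)"
proof -
  have int_coeffs: "\<forall>w\<in>gV F. c w = 0"
    if "(\<Sum>w\<in>gV F. zscale (c w) (sigma T (circuit w))) = 0" for c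
    using sum_circuits_eq_0_imp_eq_0[of c T] fun_cong[OF that]
    unfolding sum_fun_apply zscale_def by simp
  show "inj_on (\<lambda>w. sigma T (circuit w)) (gV F)"
    by (rule module.independent_image_if_sum_scale_eq_0(1)[OF module_zscale finite_V int_coeffs])
  have rat_coeffs: "\<forall>w\<in>gV F. c w = 0"
    if "(\<Sum>w\<in>gV F. qscale (c w) (qsigma T (circuit w))) = 0" for c
    using sum_circuits_eq_0_imp_eq_0[of c T] fun_cong[OF that]
    unfolding sum_fun_apply qscale_def qsigma_def by simp
  show "module.independent qscale ((\<lambda>w. qsigma T (circuit w)) ` gV F)"
    by (rule module.independent_image_if_sum_scale_eq_0(2)[OF module_qscale finite_V rat_coeffs])
qed

lemma cycle_space_eq_span_circuits:
  assumes T: "orientation G T"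
  shows "module.span qscale (qsigma T ` Gamma F Eb C) = cycle_space G T"
proof
  show "module.span qscale (qsigma T ` Gamma F Eb C) \<subseteq> cycle_space G T"
    using reduced.closed_walk_in_cycle_space[OF _ T] closed_walk_circuit Gamma_eq
    by (intro module.span_minimal[OF module_qscale _ subspace_cycle_space]) auto
  show "cycle_space G T \<subseteq> module.span qscale (qsigma T ` Gamma F Eb C)"
  proof
    fix x assume x: "x \<in> cycle_space G T"
    then have "x = (\<Sum>w\<in>gV F. qscale (circuit_coeff T x w) (qsigma T (circuit w)))"
      using eq_sum_circuits[OF T, of x]
      unfolding cycle_space_def incidence_eq_incidence_coeff G_simps qscale_def qsigma_def sum_fun_apply
      by auto
    also have "\<dots> \<in> module.span qscale (qsigma T ` Gamma F Eb C)"
      by (rule sum_scale_circuits_in_span[OF module_qscale refl])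
    finally show "x \<in> module.span qscale (qsigma T ` Gamma F Eb C)" .
  qed
qed

lemma sigma_in_int_span_circuits:
  assumes T: "orientation G T" and W: "closed_walk G W"
  shows "sigma T W \<in> module.span zscale (sigma T ` Gamma F Eb C)"
proof -
  have "sigma T W e = (\<Sum>w\<in>gV F. circuit_coeff T (sigma T W) w * sigma T (circuit w) e)" for e
    using eq_sum_circuits[OF T, of "sigma T W" e] sigma_eq_0_off_edges[OF W]
      reduced.closed_walk_balanced[OF W T] G_simps(1)
    by simp
  then have "sigma T W = (\<Sum>w\<in>gV F. zscale (circuit_coeff T (sigma T W) w) (sigma T (circuit w)))"
    by (simp add: fun_eq_iff zscale_def sum_fun_apply)
  also have "\<dots> \<in> module.span zscale (sigma T ` Gamma F Eb C)"
    by (rule sum_scale_circuits_in_span[OF module_zscale refl])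
  finally show ?thesis .
qed

end

theorem mainTheorem16:
  fixes F :: "('v, 'h) graph" and Eb :: "'h set set" and C :: "'v set \<Rightarrow> 'h list"
  assumes "wf_graph F" and "four_regular F" and "based F Eb" and "euler_system F C"
  shows "integral_cycle_basis (delete_edges F Eb) (Gamma F Eb C)"
proof -
  interpret euler_setting F Eb C using assms by unfold_locales
  have "cycle_basis G (Gamma F Eb C)"
    unfolding cycle_basis_def
  proof (intro conjI ballI allI impI)
    show "closed_walk G W" if "W \<in> Gamma F Eb C" for W
      using that closed_walk_circuit Gamma_eq by auto
    fix T assume T: "orientation G T"
    show "inj_on (sigma T) (Gamma F Eb C)"
      unfolding Gamma_eq using circuit_sigmas_independent(1)
      by (intro inj_on_imageI) (simp add: comp_def)
    show "module.independent qscale (qsigma T ` Gamma F Eb C)"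
      unfolding Gamma_eq image_image by (rule circuit_sigmas_independent(2))
    show "module.span qscale (qsigma T ` Gamma F Eb C) = cycle_space G T"
      using cycle_space_eq_span_circuits[OF T] .
  qed
  then show ?thesis
    unfolding integral_cycle_basis_def using sigma_in_int_span_circuits by blast
qed

end
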